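(* Let $r>0$, $a<b$, $f\in L^\infty_{\rm loc}(\mathbb{R})$, $\alpha,\beta\in L^\infty_{\rm loc}(\mathbb{R})$. The problem $$D_ru=f\ \text{in }(a,b),\qquad u=\alpha\ \text{in }[a-r,a],\qquad u=\beta\ \text{in }[b,b+r]$$ has a unique solution $u$ on $[a-r,b+r]$ (up to null sets), given by $u=\alpha$ on $[a-r,a]$, $u=\beta$ on $[b,b+r]$, and for $x\in(a,b)$ $$u(x)=\frac{\overline k(x)}{\overline k(x)+\underline k(x)}\Big(\alpha(x-\underline k(x)r)-r^2\sum_{j=1}^{\underline k(x)-1}j\,f\big(x-(\underline k(x)-j)r\big)\Big)+\frac{\underline k(x)}{\overline k(x)+\underline k(x)}\Big(\beta(x+\overline k(x)r)-r^2\sum_{j=1}^{\overline k(x)-1}j\,f\big(x+(\overline k(x)-j)r\big)\Big)-r^2\frac{\underline k(x)\overline k(x)}{\overline k(x)+\underline k(x)}f(x),$$ where $\overline k(x):=\lceil (b-x)/r\rceil$ and $\underline k(x):=\lceil (x-a)/r\rceil$.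
   Context: $D_ru(x):=\dfrac{u(x+r)+u(x-r)-2u(x)}{r^2}$. The equation $D_ru=f$ in $(a,b)$ is required for a.e. $x\in(a,b)$. $\lceil t\rceil$ denotes the smallest integer $\ge t$. *)

theory Defs
  imports "HOL-Analysis.Analysis"
begin

definition Dr :: "real \<Rightarrow> (real \<Rightarrow> real) \<Rightarrow> real \<Rightarrow> real" where
  "Dr r u x = (u (x + r) + u (x - r) - 2 * u x) / r^2"

definition Linf_loc :: "(real \<Rightarrow> real) \<Rightarrow> bool" where
  "Linf_loc g \<longleftrightarrow> g \<in> borel_measurable lebesgue \<and>
     (\<forall>K. compact K \<longrightarrow> (\<exists>C. AE x in lebesgue. x \<in> K \<longrightarrow> \<bar>g x\<bar> \<le> C))"

definition is_solution ::
  "real \<Rightarrow> real \<Rightarrow> real \<Rightarrow> (real \<Rightarrow> real) \<Rightarrow> (real \<Rightarrow> real) \<Rightarrow> (real \<Rightarrow> real) \<Rightarrow> (real \<Rightarrow> real) \<Rightarrow> bool" where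
  "is_solution r a b f \<alpha> \<beta> u \<longleftrightarrow>
     (AE x in lebesgue. x \<in> {a<..<b} \<longrightarrow> Dr r u x = f x) \<and>
     (AE x in lebesgue. x \<in> {a-r..a} \<longrightarrow> u x = \<alpha> x) \<and>
     (AE x in lebesgue. x \<in> {b..b+r} \<longrightarrow> u x = \<beta> x)"

definition kbar :: "real \<Rightarrow> real \<Rightarrow> real \<Rightarrow> nat" where
  "kbar r b x = nat \<lceil>(b - x) / r\<rceil>"

definition kund :: "real \<Rightarrow> real \<Rightarrow> real \<Rightarrow> nat" where
  "kund r a x = nat \<lceil>(x - a) / r\<rceil>"

definition explicit_sol ::
  "real \<Rightarrow> real \<Rightarrow> real \<Rightarrow> (real \<Rightarrow> real) \<Rightarrow> (real \<Rightarrow> real) \<Rightarrow> (real \<Rightarrow> real) \<Rightarrow> real \<Rightarrow> real" where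
  "explicit_sol r a b f \<alpha> \<beta> x =
     (if x \<in> {a-r..a} then \<alpha> x
      else if x \<in> {b..b+r} then \<beta> x
      else (let kb = kbar r b x; ku = kund r a x in
        real kb / (real kb + real ku) *
          (\<alpha> (x - real ku * r) - r^2 * (\<Sum>j\<in>{1..<ku}. real j * f (x - (real ku - real j) * r)))
        + real ku / (real kb + real ku) *
          (\<beta> (x + real kb * r) - r^2 * (\<Sum>j\<in>{1..<kb}. real j * f (x + (real kb - real j) * r)))
        - r^2 * (real ku * real kb / (real kb + real ku)) * f x))"

end

theory Submission
  imports Defs
begin

text \<open>
  On the lattice \<open>x + j r\<close> the equation \<open>D\<^sub>r u = f\<close> is the discrete Poisson equation
  \<open>v(i+1) + v(i-1) - 2 v(i) = r\<^sup>2 c(i)\<close>, whose endpoints \<open>i = 0\<close> and \<open>i = n\<close>, with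
  \<open>n = kund r a x + kbar r b x\<close>, fall into the two boundary strips. The explicit formula is the solution of this discrete
  Dirichlet problem (a linear interpolation of the boundary values plus a discrete Green
  potential of \<open>f\<close>), which settles existence. For uniqueness, the difference of two solutions
  is discrete harmonic and vanishes at both endpoints, hence is zero. Since translations preserve
  Lebesgue null sets, a.e. every point has all its lattice translates in the set where the
  equations hold, so the pointwise argument gives uniqueness up to null sets.
\<close>

text \<open>The explicit formula read along a lattice of \<open>n + 1\<close> points: \<open>A\<close> and \<open>B\<close> are the boundary
  values at \<open>i = 0\<close> and \<open>i = n\<close>, and \<open>c i\<close> is the value of \<open>f\<close> at the \<open>i\<close>-th point.\<close>

definition lattice_sol :: "real \<Rightarrow> nat \<Rightarrow> real \<Rightarrow> real \<Rightarrow> (nat \<Rightarrow> real) \<Rightarrow> nat \<Rightarrow> real" where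
  "lattice_sol r n A B c i =
     real (n - i) / real n * (A - r^2 * (\<Sum>j\<in>{1..<i}. real j * c j))
   + real i / real n * (B - r^2 * (\<Sum>j\<in>{1..<n - i}. real j * c (n - j)))
   - r^2 * (real i * real (n - i) / real n) * c i"

lemma sum_weighted_Suc:
  "(\<Sum>j\<in>{1..<Suc k}. real j * h j) = (\<Sum>j\<in>{1..<k}. real j * h j) + real k * h k"
  by (cases k) auto

lemma lattice_sol_second_difference:
  assumes "n = p + q + 2"
  shows "lattice_sol r n A B c (p + 2) + lattice_sol r n A B c p - 2 * lattice_sol r n A B c (p + 1)
           = r^2 * c (p + 1)"
proof -
  have idx: "n - Suc (Suc p) = q" "n - p = Suc (Suc q)" "n - Suc p = Suc q"
    "c (n - Suc q) = c (Suc p)" "c (n - q) = c (Suc (Suc p))"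
    using assms by auto
  have "(real p + real q + 2) * inverse (real n) = 1"
    using assms by (simp add: field_simps)
  then show ?thesis
    unfolding lattice_sol_def add_2_eq_Suc' Suc_eq_plus1[symmetric] idx sum_weighted_Suc
      divide_inverse of_nat_Suc of_nat_add
    by algebra
qed

lemma discrete_harmonic_zero_boundary:
  fixes d :: "nat \<Rightarrow> real"
  assumes d0: "d 0 = 0" and dn: "d n = 0"
    and harmonic: "\<And>i. 1 \<le> i \<Longrightarrow> i + 1 \<le> n \<Longrightarrow> d (i + 1) + d (i - 1) - 2 * d i = 0"
    and "i \<le> n"
  shows "d i = 0"
proof -
  have linear: "d k = real k * d 1 \<and> d (Suc k) = real (Suc k) * d 1" if "k + 1 \<le> n" for k
    using that
  proof (induction k)
    case 0
    then show ?case using d0 by simp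
  next
    case (Suc k)
    then have IH: "d k = real k * d 1" "d (Suc k) = real (Suc k) * d 1" by auto
    have "d (Suc k + 1) + d (Suc k - 1) - 2 * d (Suc k) = 0"
      using Suc.prems by (intro harmonic) auto
    then show ?case using IH by (simp add: algebra_simps)
  qed
  show ?thesis
  proof (cases "n = 0")
    case True
    then show ?thesis using \<open>i \<le> n\<close> d0 by simp
  next
    case False
    then have "d 1 = 0" using linear[of "n - 1"] dn by simp
    then show ?thesis using linear[of i] \<open>i \<le> n\<close> dn by (cases "i = n") auto
  qed
qed

lemma AE_lebesgue_translate:
  fixes t :: "'a::euclidean_space"
  assumes "AE x in lebesgue. P x"
  shows "AE x in lebesgue. P (x + t)"
proof -
  obtain N where N: "\<And>x. x \<in> space lebesgue - N \<Longrightarrow> P x" "N \<in> null_sets lebesgue"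
    using AE_E3[OF assms] by metis
  have "negligible ((+) (- t) ` N)"
    using N(2) by (intro negligible_translation) (simp add: negligible_iff_null_sets)
  moreover have "{x \<in> space lebesgue. \<not> P (x + t)} \<subseteq> (+) (- t) ` N"
    using N(1) by (auto intro!: image_eqI[where x = "_ + t"])
  ultimately show ?thesis
    by (intro AE_I') (simp_all add: negligible_iff_null_sets)
qed

lemma nat_ceiling_bounds:
  fixes t :: real
  assumes "t > 0"
  shows "1 \<le> nat \<lceil>t\<rceil>" "real (nat \<lceil>t\<rceil>) - 1 < t" "t \<le> real (nat \<lceil>t\<rceil>)"
proof -
  have "1 \<le> \<lceil>t\<rceil>" using assms by simp
  then have "real (nat \<lceil>t\<rceil>) = of_int \<lceil>t\<rceil>" by simp
  then show "1 \<le> nat \<lceil>t\<rceil>" "real (nat \<lceil>t\<rceil>) - 1 < t" "t \<le> real (nat \<lceil>t\<rceil>)"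
    using \<open>1 \<le> \<lceil>t\<rceil>\<close> ceiling_correct[of t] by linarith+
qed

lemma kund_bounds:
  assumes "r > 0" and "a < x"
  shows "1 \<le> kund r a x" "(real (kund r a x) - 1) * r < x - a" "x - a \<le> real (kund r a x) * r"
  using nat_ceiling_bounds[of "(x - a) / r", folded kund_def] assms
  by (simp_all add: pos_less_divide_eq pos_divide_le_eq)

lemma kbar_bounds:
  assumes "r > 0" and "x < b"
  shows "1 \<le> kbar r b x" "(real (kbar r b x) - 1) * r < b - x" "b - x \<le> real (kbar r b x) * r"
  using nat_ceiling_bounds[of "(b - x) / r", folded kbar_def] assms
  by (simp_all add: pos_less_divide_eq pos_divide_le_eq)

lemma kund_eqI:
  assumes "r > 0" and "(real i - 1) * r < y - a" and "y - a \<le> real i * r"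
  shows "kund r a y = i"
proof -
  have "\<lceil>(y - a) / r\<rceil> = int i"
    unfolding ceiling_eq_iff using assms by (simp add: field_simps)
  then show ?thesis unfolding kund_def by simp
qed

lemma kbar_eqI:
  assumes "r > 0" and "(real i - 1) * r < b - y" and "b - y \<le> real i * r"
  shows "kbar r b y = i"
proof -
  have "\<lceil>(b - y) / r\<rceil> = int i"
    unfolding ceiling_eq_iff using assms by (simp add: field_simps)
  then show ?thesis unfolding kbar_def by simp
qed

text \<open>
  The lattice through \<open>x \<in> (a, b)\<close> is indexed so that \<open>i = 0\<close> is its point in \<open>[a - r, a]\<close>,
  \<open>i = kund r a x\<close> is \<open>x\<close> itself and \<open>i = kund r a x + kbar r b x\<close> its point in \<open>[b, b + r]\<close>.
\<close>

lemma lattice_left_end: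
  assumes "r > 0" and "x \<in> {a<..<b}"
  shows "x - real (kund r a x) * r \<in> {a - r..a}"
  using kund_bounds[of r a x] assms by (auto simp: algebra_simps)

lemma lattice_right_end:
  assumes "r > 0" and "x \<in> {a<..<b}"
  shows "x + real (kbar r b x) * r \<in> {b..b + r}"
  using kbar_bounds[of r x b] assms by (auto simp: algebra_simps)

lemma lattice_interior:
  assumes r: "r > 0" and x: "x \<in> {a<..<b}"
    and i: "0 < i" "i < kund r a x + kbar r b x"
  defines "y \<equiv> x + (real i - real (kund r a x)) * r"
  shows "y \<in> {a<..<b}" "kund r a y = i" "kbar r b y = kund r a x + kbar r b x - i"
proof -
  note ku = kund_bounds[of r a x] and kb = kbar_bounds[of r x b]
  have below: "(real i - 1) * r < y - a" and above: "y - a \<le> real i * r"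
    using ku r x unfolding y_def by (auto simp: algebra_simps)
  have below': "(real (kund r a x + kbar r b x - i) - 1) * r < b - y"
    and above': "b - y \<le> real (kund r a x + kbar r b x - i) * r"
    using kb r x i unfolding y_def by (auto simp: algebra_simps of_nat_diff)
  have "(real i - 1) * r \<ge> 0" "(real (kund r a x + kbar r b x - i) - 1) * r \<ge> 0"
    using i r by auto
  then show "y \<in> {a<..<b}" using below below' by auto
  show "kund r a y = i" using r below above by (rule kund_eqI)
  show "kbar r b y = kund r a x + kbar r b x - i" using r below' above' by (rule kbar_eqI)
qed

lemma explicit_sol_left:
  assumes "x \<in> {a - r..a}"
  shows "explicit_sol r a b f \<alpha> \<beta> x = \<alpha> x"
  using assms by (simp only: explicit_sol_def if_P)

lemma explicit_sol_right:
  assumes "a < b" and "x \<in> {b..b + r}"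
  shows "explicit_sol r a b f \<alpha> \<beta> x = \<beta> x"
proof -
  have outside: "x \<notin> {a - r..a}" using assms by auto
  show ?thesis unfolding explicit_sol_def by (simp only: if_not_P[OF outside] if_P[OF assms(2)])
qed

lemma explicit_sol_interior:
  assumes y: "y \<in> {a<..<b}" and "kund r a y = i" and "kbar r b y = n - i" and "0 < i" "i < n"
  shows "explicit_sol r a b f \<alpha> \<beta> y
           = lattice_sol r n (\<alpha> (y - real i * r)) (\<beta> (y + real (n - i) * r))
               (\<lambda>m. f (y + (real m - real i) * r)) i"
proof -
  have outside: "y \<notin> {a - r..a}" "y \<notin> {b..b + r}" using y by auto
  have n: "real (n - i) + real i = real n" using \<open>i < n\<close> by simp
  have left: "(\<Sum>j\<in>{1..<i}. real j * f (y - (real i - real j) * r))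
                = (\<Sum>j\<in>{1..<i}. real j * f (y + (real j - real i) * r))"
    by (intro sum.cong) (auto simp: algebra_simps)
  have right: "(\<Sum>j\<in>{1..<n - i}. real j * f (y + (real (n - i) - real j) * r))
                 = (\<Sum>j\<in>{1..<n - i}. real j * f (y + (real (n - j) - real i) * r))"
    using \<open>i < n\<close> by (intro sum.cong) (auto simp: algebra_simps of_nat_diff)
  show ?thesis
    unfolding explicit_sol_def Let_def if_not_P[OF outside(1)] if_not_P[OF outside(2)] assms(2,3)
      n left right lattice_sol_def
    by simp
qed

lemma explicit_sol_eq_lattice_sol:
  assumes r: "r > 0" and ab: "a < b" and x: "x \<in> {a<..<b}"
    and "i \<le> kund r a x + kbar r b x"
  shows "explicit_sol r a b f \<alpha> \<beta> (x + (real i - real (kund r a x)) * r)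
           = lattice_sol r (kund r a x + kbar r b x)
               (\<alpha> (x - real (kund r a x) * r)) (\<beta> (x + real (kbar r b x) * r))
               (\<lambda>m. f (x + (real m - real (kund r a x)) * r)) i"
proof -
  define ku kb where "ku = kund r a x" and "kb = kbar r b x"
  let ?y = "x + (real i - real ku) * r"
  have "real ku + real kb > 0" using kund_bounds[of r a x] r x unfolding ku_def by simp
  consider "i = 0" | "i = ku + kb" | "0 < i \<and> i < ku + kb"
    using assms(4) unfolding ku_def kb_def by linarith
  then show ?thesis
  proof cases
    case 1
    then show ?thesis
      using explicit_sol_left[OF lattice_left_end[OF r x]] \<open>real ku + real kb > 0\<close>
      by (simp add: lattice_sol_def ku_def kb_def)
  next
    case 2
    have "?y = x + real kb * r" using 2 by (simp add: algebra_simps)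
    then show ?thesis
      using 2 explicit_sol_right[OF ab lattice_right_end[OF r x]] \<open>real ku + real kb > 0\<close>
      by (simp add: lattice_sol_def ku_def kb_def)
  next
    case 3
    note y = lattice_interior[OF r x, of i, folded ku_def kb_def]
    have "explicit_sol r a b f \<alpha> \<beta> ?y
            = lattice_sol r (ku + kb) (\<alpha> (?y - real i * r)) (\<beta> (?y + real (ku + kb - i) * r))
                (\<lambda>m. f (?y + (real m - real i) * r)) i"
      using 3 y by (intro explicit_sol_interior) auto
    also have "\<dots> = lattice_sol r (ku + kb) (\<alpha> (x - real ku * r)) (\<beta> (x + real kb * r))
                      (\<lambda>m. f (x + (real m - real ku) * r)) i"
      using 3 by (simp add: algebra_simps of_nat_diff)
    finally show ?thesis unfolding ku_def kb_def .
  qed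
qed

lemma Dr_explicit_sol:
  assumes r: "r > 0" and ab: "a < b" and x: "x \<in> {a<..<b}"
  shows "Dr r (explicit_sol r a b f \<alpha> \<beta>) x = f x"
proof -
  define ku kb where "ku = kund r a x" and "kb = kbar r b x"
  obtain p q where pq: "ku = p + 1" "kb = q + 1"
    using kund_bounds[of r a x] kbar_bounds[of r x b] r x unfolding ku_def kb_def
    by (metis add.commute le_Suc_ex Suc_eq_plus1_left greaterThanLessThan_iff)
  let ?E = "explicit_sol r a b f \<alpha> \<beta>"
  let ?V = "lattice_sol r (ku + kb) (\<alpha> (x - real ku * r)) (\<beta> (x + real kb * r))
              (\<lambda>m. f (x + (real m - real ku) * r))"
  note on_lattice = explicit_sol_eq_lattice_sol[OF r ab x, of _ f \<alpha> \<beta>, folded ku_def kb_def]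
  have "?E (x + r) = ?V (p + 2)" "?E (x - r) = ?V p" "?E x = ?V (p + 1)"
    using on_lattice[of "p + 2"] on_lattice[of p] on_lattice[of "p + 1"] pq
    by (simp_all add: algebra_simps)
  moreover have "?V (p + 2) + ?V p - 2 * ?V (p + 1) = r^2 * f x"
    using lattice_sol_second_difference[of "ku + kb" p q] pq by simp
  ultimately show ?thesis using r by (simp add: Dr_def)
qed

lemma is_solution_explicit_sol:
  assumes "r > 0" and "a < b"
  shows "is_solution r a b f \<alpha> \<beta> (explicit_sol r a b f \<alpha> \<beta>)"
  unfolding is_solution_def
  using Dr_explicit_sol[OF assms] explicit_sol_left explicit_sol_right[OF assms(2)]
  by (intro conjI AE_I2) auto

definition solves_at ::
  "real \<Rightarrow> real \<Rightarrow> real \<Rightarrow> (real \<Rightarrow> real) \<Rightarrow> (real \<Rightarrow> real) \<Rightarrow> (real \<Rightarrow> real) \<Rightarrow> (real \<Rightarrow> real)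
     \<Rightarrow> real \<Rightarrow> bool" where
  "solves_at r a b f \<alpha> \<beta> u x \<longleftrightarrow>
     (x \<in> {a<..<b} \<longrightarrow> Dr r u x = f x) \<and> (x \<in> {a - r..a} \<longrightarrow> u x = \<alpha> x) \<and>
     (x \<in> {b..b + r} \<longrightarrow> u x = \<beta> x)"

lemma is_solution_iff_AE_solves_at:
  "is_solution r a b f \<alpha> \<beta> u \<longleftrightarrow> (AE x in lebesgue. solves_at r a b f \<alpha> \<beta> u x)"
  by (simp add: is_solution_def solves_at_def AE_conj_iff)

lemma solves_at_lattice_imp_eq_explicit_sol:
  assumes r: "r > 0" and ab: "a < b" and x: "x \<in> {a - r..b + r}"
    and sol: "\<And>k::int. solves_at r a b f \<alpha> \<beta> u (x + of_int k * r)"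
  shows "u x = explicit_sol r a b f \<alpha> \<beta> x"
proof -
  let ?E = "explicit_sol r a b f \<alpha> \<beta>"
  have at_x: "solves_at r a b f \<alpha> \<beta> u x" using sol[of 0] by simp
  consider "x \<in> {a - r..a}" | "x \<in> {b..b + r}" | "x \<in> {a<..<b}" using x by force
  then show ?thesis
  proof cases
    case 1
    then show ?thesis using at_x explicit_sol_left unfolding solves_at_def by simp
  next
    case 2
    then show ?thesis using at_x explicit_sol_right[OF ab] unfolding solves_at_def by simp
  next
    case 3
    define ku kb where "ku = kund r a x" and "kb = kbar r b x"
    define y where "y i = x + (real i - real ku) * r" for i :: nat
    define d where "d i = u (y i) - ?E (y i)" for i
    have sol_y: "solves_at r a b f \<alpha> \<beta> u (y i)" for i
      using sol[of "int i - int ku"] unfolding y_def by simp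
    have "y 0 \<in> {a - r..a}" using lattice_left_end[OF r 3] unfolding y_def ku_def by simp
    then have d0: "d 0 = 0" using sol_y[of 0] explicit_sol_left unfolding solves_at_def d_def by simp
    have "y (ku + kb) \<in> {b..b + r}"
      using lattice_right_end[OF r 3] unfolding y_def kb_def by (simp add: algebra_simps)
    then have dn: "d (ku + kb) = 0"
      using sol_y[of "ku + kb"] explicit_sol_right[OF ab] unfolding solves_at_def d_def by simp
    have harmonic: "d (i + 1) + d (i - 1) - 2 * d i = 0" if "1 \<le> i" "i + 1 \<le> ku + kb" for i
    proof -
      have yi: "y i \<in> {a<..<b}"
        using lattice_interior[OF r 3, of i] that unfolding y_def ku_def kb_def by simp
      have neighbours: "y i + r = y (i + 1)" "y i - r = y (i - 1)"
        using that unfolding y_def by (simp_all add: algebra_simps of_nat_diff)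
      have "Dr r u (y i) - Dr r ?E (y i) = (d (i + 1) + d (i - 1) - 2 * d i) / r^2"
        unfolding Dr_def d_def neighbours by (simp add: diff_divide_distrib[symmetric] algebra_simps)
      moreover have "Dr r u (y i) = f (y i)" using sol_y[of i] yi unfolding solves_at_def by simp
      ultimately show ?thesis using Dr_explicit_sol[OF r ab yi] r by simp
    qed
    have "d ku = 0" by (rule discrete_harmonic_zero_boundary[OF d0 dn harmonic]) auto
    then show ?thesis unfolding d_def y_def by simp
  qed
qed

lemma is_solution_AE_eq_explicit_sol:
  assumes "r > 0" and "a < b" and "is_solution r a b f \<alpha> \<beta> u"
  shows "AE x in lebesgue. x \<in> {a - r..b + r} \<longrightarrow> u x = explicit_sol r a b f \<alpha> \<beta> x"
proof -
  have "AE x in lebesgue. solves_at r a b f \<alpha> \<beta> u x"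
    using assms(3) by (simp add: is_solution_iff_AE_solves_at)
  then have "\<forall>k::int. AE x in lebesgue. solves_at r a b f \<alpha> \<beta> u (x + of_int k * r)"
    by (intro allI AE_lebesgue_translate)
  then have "AE x in lebesgue. \<forall>k::int. solves_at r a b f \<alpha> \<beta> u (x + of_int k * r)"
    by (simp add: AE_all_countable)
  then show ?thesis
    by eventually_elim (use assms(1,2) solves_at_lattice_imp_eq_explicit_sol in blast)
qed

theorem theorem1p9:
  fixes r a b :: real and f \<alpha> \<beta> :: "real \<Rightarrow> real"
  assumes "r > 0" and "a < b"
    and "Linf_loc f" and "Linf_loc \<alpha>" and "Linf_loc \<beta>"
  shows "is_solution r a b f \<alpha> \<beta> (explicit_sol r a b f \<alpha> \<beta>) \<and>
         (\<forall>u. is_solution r a b f \<alpha> \<beta> u \<longrightarrow>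
            (AE x in lebesgue. x \<in> {a-r..b+r} \<longrightarrow> u x = explicit_sol r a b f \<alpha> \<beta> x))"
  using is_solution_explicit_sol[OF assms(1,2)] is_solution_AE_eq_explicit_sol[OF assms(1,2)]
  by blast

end
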